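(* Let $A$ be a $\boldsymbol{\mathit{ba}\ell}$-algebra, $X={\sf Arch}(A)\setminus\{A\}$, $0\le a\in A$, $I\in X$, and $\alpha:A\to D(\mathbb R[B])$ as in the context. (1) If $s_I=\sup\{r\in\mathbb R\mid (a-r)^-\in I\}$, then $(a-s_I)^-\in I$. (2) For $r\in\mathbb R$: $rx_{\lnot I}\le\alpha(a)$ if and only if $(a-r)^-\in I$. (3) $s_I=\sup\{r\in\mathbb R\mid rx_{\lnot I}\le\alpha(a)\}$, and $I\vee[\![(a-s_I)^+]\!]\ne A$.
   Context: A $\boldsymbol{\mathit{ba}\ell}$-algebra is a commutative unital lattice-ordered algebra $A$ over $\mathbb R$ that is bounded (for every $a\in A$ there is an integer $n\ge1$ with $a\le n\cdot1$) and archimedean (if $na\le b$ for all $n\ge1$ then $a\le0$); reals $r$ are identified with $r\cdot1$. $a^+=a\vee0$, $a^-=(-a)\vee0$. An $\ell$-ideal is a ring ideal $I$ with $|a|\le|b|$, $b\in I\Rightarrow a\in I$; it is archimedean if $A/I$ is archimedean. ${\sf Arch}(A)$ is the set of archimedean $\ell$-ideals ordered by inclusion, a frame with meet $\cap$ and join $I\vee J$ the least archimedean $\ell$-ideal containing $I\cup J$; $[\![S]\!]$ is the intersection of all archimedean $\ell$-ideals containing $S\subseteq A$. $B$ is the free boolean extension of the bounded distributive lattice ${\sf Arch}(A)$; ${\sf Arch}(A)\subseteq B$ and $\lnot$ is complement in $B$. $\mathbb R[B]$ is the quotient of $\mathbb R[x_e\mid e\in B]$ by the ideal generated by $x_{e\wedge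 f}-x_ex_f$, $x_{e\vee f}-(x_e+x_f-x_ex_f)$, $x_{\lnot e}-(1-x_e)$, $x_0$; $D(\mathbb R[B])$ is its Dedekind completion (Dedekind complete $\boldsymbol{\mathit{ba}\ell}$-algebra containing $\mathbb R[B]$, every element a join of elements of $\mathbb R[B]$). $\alpha(a)=-s+\bigvee\{rx_{\lnot I}\mid r\in\mathbb R,\ I\in{\sf Arch}(A),\ (a+s-r)^-\in I\}$ for any $s\in\mathbb R$ with $a+s\ge0$ (well defined, independent of $s$). *)

theory Defs
  imports Complex_Main "HOL-Library.Poly_Mapping"
begin

text \<open>A bounded archimedean lattice-ordered commutative unital real algebra.
  The real scalar multiplication is scaleR; reals r are identified with of_real r = r *R 1.\<close>

class bal_algebra = comm_ring_1 + real_algebra_1 + lattice +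
  assumes bal_add_mono: "a \<le> b \<Longrightarrow> a + c \<le> b + c"
    and bal_mult_nonneg: "0 \<le> a \<Longrightarrow> 0 \<le> b \<Longrightarrow> 0 \<le> a * b"
    and bal_scale_nonneg: "0 \<le> a \<Longrightarrow> 0 \<le> r \<Longrightarrow> 0 \<le> r *\<^sub>R a"
    and bal_bounded: "\<exists>n::nat. n \<ge> 1 \<and> a \<le> of_nat n"
    and bal_archimedean: "(\<And>n::nat. n \<ge> 1 \<Longrightarrow> of_nat n * a \<le> b) \<Longrightarrow> a \<le> 0"

definition pos :: "'a::{lattice, ab_group_add} \<Rightarrow> 'a" where
  "pos a = sup a 0"

definition neg :: "'a::{lattice, ab_group_add} \<Rightarrow> 'a" where
  "neg a = sup (- a) 0"

definition labs :: "'a::{lattice, ab_group_add} \<Rightarrow> 'a" where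
  "labs a = sup a (- a)"

definition ring_ideal :: "'a::comm_ring_1 set \<Rightarrow> bool" where
  "ring_ideal I \<longleftrightarrow> 0 \<in> I \<and> (\<forall>a\<in>I. \<forall>b\<in>I. a - b \<in> I) \<and> (\<forall>a\<in>I. \<forall>c. c * a \<in> I)"

definition l_ideal :: "'a::bal_algebra set \<Rightarrow> bool" where
  "l_ideal I \<longleftrightarrow> ring_ideal I \<and> (\<forall>a b. labs a \<le> labs b \<and> b \<in> I \<longrightarrow> a \<in> I)"

text \<open>Order of the quotient A/I: [x] <= [y] iff x' <= y' for some representatives,
  i.e. x <= y + c for some c in I.\<close>
definition quot_le :: "'a::bal_algebra set \<Rightarrow> 'a \<Rightarrow> 'a \<Rightarrow> bool" where
  "quot_le I x y \<longleftrightarrow> (\<exists>c\<in>I. x \<le> y + c)"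

text \<open>Archimedean ell-ideal: A/I is archimedean.\<close>
definition arch_ideal :: "'a::bal_algebra set \<Rightarrow> bool" where
  "arch_ideal I \<longleftrightarrow> l_ideal I \<and>
     (\<forall>x y. (\<forall>n::nat. n \<ge> 1 \<longrightarrow> quot_le I (of_nat n * x) y) \<longrightarrow> quot_le I x 0)"

definition Arch :: "'a::bal_algebra set set" where
  "Arch = {I. arch_ideal I}"

definition arch_gen :: "'a::bal_algebra set \<Rightarrow> 'a set" where
  "arch_gen S = \<Inter> {I. arch_ideal I \<and> S \<subseteq> I}"

definition arch_join :: "'a::bal_algebra set \<Rightarrow> 'a set \<Rightarrow> 'a set" where
  "arch_join I J = arch_gen (I \<union> J)"

text \<open>e embeds the bounded distributive lattice Arch(A) (bottom arch_gen {}, top UNIV,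
  meet intersection, join arch_join) into the boolean algebra 'b, and its image generates 'b
  as a boolean algebra.\<close>
definition free_bool_ext :: "('a::bal_algebra set \<Rightarrow> 'b::boolean_algebra) \<Rightarrow> bool" where
  "free_bool_ext e \<longleftrightarrow>
     inj_on e Arch \<and> e (arch_gen {}) = bot \<and> e UNIV = top \<and>
     (\<forall>I\<in>Arch. \<forall>J\<in>Arch. e (I \<inter> J) = inf (e I) (e J) \<and> e (arch_join I J) = sup (e I) (e J)) \<and>
     (\<forall>S. e ` Arch \<subseteq> S \<and> (\<forall>u\<in>S. \<forall>v\<in>S. inf u v \<in> S \<and> sup u v \<in> S) \<and> (\<forall>u\<in>S. - u \<in> S)
          \<longrightarrow> S = UNIV)"

type_synonym 'b rpoly = "('b \<Rightarrow>\<^sub>0 nat) \<Rightarrow>\<^sub>0 real"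

text \<open>The polynomial variable x_e of R[x_e | e in B].\<close>
definition pvar :: "'b \<Rightarrow> 'b rpoly" where
  "pvar e = Poly_Mapping.single (Poly_Mapping.single e 1) 1"

definition ideal_gen :: "'a::comm_ring_1 set \<Rightarrow> 'a set" where
  "ideal_gen G = \<Inter> {J. ring_ideal J \<and> G \<subseteq> J}"

definition rel_ideal :: "('b::boolean_algebra) rpoly set" where
  "rel_ideal = ideal_gen
     ({pvar (inf e f) - pvar e * pvar f | e f. True} \<union>
      {pvar (sup e f) - (pvar e + pvar f - pvar e * pvar f) | e f. True} \<union>
      {pvar (- e) - (1 - pvar e) | e. True} \<union>
      {pvar bot})"

definition peval :: "('b \<Rightarrow> 'd::bal_algebra) \<Rightarrow> 'b rpoly \<Rightarrow> 'd" where
  "peval x p = (\<Sum>m\<in>Poly_Mapping.keys p.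
       Poly_Mapping.lookup p m *\<^sub>R (\<Prod>e\<in>Poly_Mapping.keys m. x e ^ Poly_Mapping.lookup m e))"

definition is_lub :: "'d::order \<Rightarrow> 'd set \<Rightarrow> bool" where
  "is_lub l S \<longleftrightarrow> (\<forall>y\<in>S. y \<le> l) \<and> (\<forall>u. (\<forall>y\<in>S. y \<le> u) \<longrightarrow> l \<le> u)"

definition lub :: "'d::order set \<Rightarrow> 'd" where
  "lub S = (THE l. is_lub l S)"

definition dedekind_complete :: "'d::order itself \<Rightarrow> bool" where
  "dedekind_complete _ \<longleftrightarrow>
     (\<forall>S::'d set. S \<noteq> {} \<and> (\<exists>u. \<forall>y\<in>S. y \<le> u) \<longrightarrow> (\<exists>l. is_lub l S))"

text \<open>The bal-algebra 'd, with x e the image of x_e, is a Dedekind completion D(R[B]):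
  'd is Dedekind complete, the evaluation map R[x_e] -> 'd has kernel exactly the ideal
  of relations (so it induces an embedding of R[B] = R[x_e]/rel_ideal into 'd), and every
  element of 'd is a join of elements of (the image of) R[B].\<close>
definition RB_completion :: "('b::boolean_algebra \<Rightarrow> 'd::bal_algebra) \<Rightarrow> bool" where
  "RB_completion x \<longleftrightarrow>
     dedekind_complete TYPE('d) \<and>
     (\<forall>p. peval x p = 0 \<longleftrightarrow> p \<in> rel_ideal) \<and>
     (\<forall>d. \<exists>S \<subseteq> range (peval x). is_lub d S)"

definition alpha :: "('a::bal_algebra set \<Rightarrow> 'b::boolean_algebra) \<Rightarrow> ('b \<Rightarrow> 'd::bal_algebra)
    \<Rightarrow> 'a \<Rightarrow> 'd" where
  "alpha e x a = (let s = (SOME s::real. 0 \<le> a + of_real s) in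
     of_real (- s) + lub {r *\<^sub>R x (- e I) | r I. I \<in> Arch \<and> neg (a + of_real s - of_real r) \<in> I})"

end

theory Submission
  imports Defs "HOL-Library.Lattice_Algebras"
begin

(*
  Let s be the supremum of the cut {r | (a - r)^- in I}. Since I is archimedean and
  (a - s)^- <= (a - s + 1/n)^- + 1/n, the element (a - s)^- lies in I, so the cut is
  exactly the interval (-inf, s].

  After shifting a to b = a + s0 >= 0, alpha(a) + s0 is the join of the elements
  r x(-J) with (b - r)^- in J. If r <= s, both (r + s0) x(-I) and s0 (from J = 0) are
  among them, and splitting along the idempotent x(-I) gives r x(-I) <= alpha(a).
  Conversely, let s < t < r. Every term of the join is at most (t + s0) + M x(C) with
  C = [[(a - s)^+]], because a term with larger coefficient comes from an ideal J with
  J v C = A. Multiplying by the idempotent x(-I) (1 - x(C)) = x(-(I v C)) then forces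
  it to vanish. But I v C is proper: it lies in the archimedean l-ideal of all d with
  |d| <= eps + n (a - s)^+ + i for every eps > 0, which misses 1 by maximality of s;
  and x(w) is nonzero for w <> 0, as one sees by evaluating at an ultrafilter.
*)

section \<open>Order and lattice structure of ba\<ell>-algebras\<close>

context bal_algebra
begin

subclass ordered_comm_ring
proof
  fix a b c :: 'a
  show "a \<le> b \<Longrightarrow> c + a \<le> c + b"
    using bal_add_mono[of a b c] by (simp add: add.commute)
  assume "a \<le> b" "0 \<le> c"
  then have "0 \<le> c * (b - a)"
    using bal_add_mono[of a b "- a"] bal_mult_nonneg by simp
  then show "c * a \<le> c * b"
    using bal_add_mono[of 0 "c * (b - a)" "c * a"] by (simp add: algebra_simps)
qed

subclass lattice_ab_group_add ..

end

lemma bal_scaleR_left_mono: "x \<le> y \<Longrightarrow> 0 \<le> a \<Longrightarrow> a *\<^sub>R x \<le> a *\<^sub>R (y::'a::bal_algebra)"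
  using bal_scale_nonneg[of "y - x" a] by (simp add: scaleR_diff_right)

lemma bal_scaleR_right_mono: "a \<le> b \<Longrightarrow> 0 \<le> x \<Longrightarrow> a *\<^sub>R x \<le> b *\<^sub>R (x::'a::bal_algebra)"
  using bal_scale_nonneg[of x "b - a"] by (simp add: scaleR_diff_left)

lemma bal_zero_le_one: "0 \<le> (1::'a::bal_algebra)"
proof -
  obtain n :: nat where "- 1 \<le> (of_nat n :: 'a)"
    using bal_bounded by blast
  then have "0 \<le> real (Suc n) *\<^sub>R (1::'a)"
    using add_left_mono[of "- 1" "of_nat n :: 'a" 1] by (simp add: scaleR_conv_of_real)
  then have "0 \<le> (1 / real (Suc n)) *\<^sub>R (real (Suc n) *\<^sub>R (1::'a))"
    by (rule bal_scale_nonneg) simp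
  then show ?thesis
    by simp
qed

lemma bal_of_real_nonneg: "0 \<le> r \<Longrightarrow> 0 \<le> (of_real r :: 'a::bal_algebra)"
  using bal_scale_nonneg[OF bal_zero_le_one] by (simp add: of_real_def)

lemma bal_of_real_mono: "r \<le> s \<Longrightarrow> (of_real r :: 'a::bal_algebra) \<le> of_real s"
  using bal_of_real_nonneg[of "s - r"] by simp

lemma bal_of_nat_nonneg: "0 \<le> (of_nat n :: 'a::bal_algebra)"
  using bal_of_real_nonneg[of "real n"] by simp

lemma scaleR_of_real: "r *\<^sub>R (of_real s :: 'a::real_algebra_1) = of_real (r * s)"
  by (simp only: scaleR_conv_of_real of_real_mult)

lemma of_nat_mult_eq_scaleR: "of_nat n * x = real n *\<^sub>R (x::'a::real_algebra_1)"
  by (simp add: scaleR_conv_of_real)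

lemma pos_nonneg: "0 \<le> pos (y::'a::lattice_ab_group_add)"
  by (simp add: pos_def)

lemma pos_ge: "y \<le> pos (y::'a::lattice_ab_group_add)"
  by (simp add: pos_def)

lemma neg_nonneg: "0 \<le> neg (y::'a::lattice_ab_group_add)"
  by (simp add: neg_def)

lemma neg_ge: "- y \<le> neg (y::'a::lattice_ab_group_add)"
  by (simp add: neg_def)

lemma neg_eq_0: "0 \<le> y \<Longrightarrow> neg (y::'a::lattice_ab_group_add) = 0"
  by (simp add: neg_def sup_absorb2)

lemma neg_antimono: "y \<le> z \<Longrightarrow> neg z \<le> neg (y::'a::lattice_ab_group_add)"
  unfolding neg_def by (rule sup_mono) simp_all

lemma neg_diff_le: "0 \<le> c \<Longrightarrow> neg (y - c) \<le> neg y + (c::'a::lattice_ab_group_add)"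
  unfolding neg_def by (rule sup_least) (simp_all add: add_increasing add_mono)

lemma add_neg_eq_pos: "y + neg y = pos (y::'a::lattice_ab_group_add)"
  unfolding neg_def pos_def by (simp add: add_sup_distrib_left sup_commute)

lemma pos_diff_neg: "pos y - neg y = (y::'a::lattice_ab_group_add)"
  using add_neg_eq_pos[of y] by (simp add: algebra_simps)

lemma inf_pos_neg: "inf (pos y) (neg y) = (0::'a::lattice_ab_group_add)"
proof -
  have "inf (pos y) (neg y) = inf (neg y + y) (neg y + 0)"
    using add_neg_eq_pos[of y] by (simp add: add.commute)
  also have "\<dots> = neg y + inf y 0"
    by (simp add: add_inf_distrib_left)
  also have "inf y 0 = - neg y"
    unfolding neg_def by simp
  finally show ?thesis
    by simp
qed

lemma labs_ge: "y \<le> labs (y::'a::lattice_ab_group_add)"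
  by (simp add: labs_def)

lemma labs_ge_minus: "- y \<le> labs (y::'a::lattice_ab_group_add)"
  by (simp add: labs_def)

lemma labs_nonneg: "0 \<le> labs (y::'a::lattice_ab_group_add)"
proof -
  have "y + - y \<le> labs y + labs y"
    by (rule add_mono) (simp_all add: labs_def)
  then show ?thesis
    by simp
qed

lemma labs_of_nonneg: "0 \<le> y \<Longrightarrow> labs y = (y::'a::lattice_ab_group_add)"
  unfolding labs_def by (rule sup_absorb1) (meson neg_le_0_iff_le order_trans)

lemma labs_le_iff: "labs y \<le> z \<longleftrightarrow> y \<le> z \<and> - y \<le> (z::'a::lattice_ab_group_add)"
  by (simp add: labs_def)

lemma labs_diff_le: "labs (y - z) \<le> labs y + labs (z::'a::lattice_ab_group_add)"
  unfolding labs_le_iff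
  using add_mono[OF labs_ge[of y] labs_ge_minus[of z]] add_mono[OF labs_ge_minus[of y] labs_ge[of z]]
  by simp

lemma labs_mult_le: "labs (c * d) \<le> labs c * labs (d::'a::bal_algebra)"
proof -
  have c: "0 \<le> labs c - c" "0 \<le> labs c + c"
    using labs_ge[of c] add_right_mono[OF labs_ge_minus[of c], of c] by simp_all
  have d: "0 \<le> labs d - d" "0 \<le> labs d + d"
    using labs_ge[of d] add_right_mono[OF labs_ge_minus[of d], of d] by simp_all
  \<comment> \<open>twice each of the two differences is a sum of products of nonnegative factors\<close>
  have "0 \<le> (labs c - c) * (labs d + d) + (labs c + c) * (labs d - d)"
    by (intro add_nonneg_nonneg mult_nonneg_nonneg c d)
  also have "\<dots> = (labs c * labs d - c * d) + (labs c * labs d - c * d)"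
    by (simp add: algebra_simps)
  finally have upper: "c * d \<le> labs c * labs d"
    by (simp only: zero_le_double_add_iff_zero_le_single_add diff_ge_0_iff_ge)
  have "0 \<le> (labs c + c) * (labs d + d) + (labs c - c) * (labs d - d)"
    by (intro add_nonneg_nonneg mult_nonneg_nonneg c d)
  also have "\<dots> = (labs c * labs d + c * d) + (labs c * labs d + c * d)"
    by (simp add: algebra_simps)
  finally have "0 \<le> labs c * labs d + c * d"
    by (simp only: zero_le_double_add_iff_zero_le_single_add)
  then have "- (c * d) \<le> labs c * labs d"
    using add_right_mono[of 0 "labs c * labs d + c * d" "- (c * d)"] by simp
  with upper show ?thesis
    unfolding labs_le_iff by blast
qed

lemma inf_add_eq_0:
  fixes u v w :: "'a::lattice_ab_group_add"
  assumes "0 \<le> u" "0 \<le> v" "0 \<le> w" "inf u v = 0" "inf u w = 0"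
  shows "inf u (v + w) = 0"
proof -
  have "inf u (v + w) \<le> inf (u + w) (v + w)"
    using assms by (meson add_increasing2 inf_mono order_refl)
  also have "\<dots> = inf u v + w"
    by (simp add: add_inf_distrib_right)
  finally have "inf u (v + w) \<le> inf u w"
    using assms(4) by simp
  then show ?thesis
    using assms by (simp add: antisym)
qed

lemma inf_of_nat_mult_eq_0:
  fixes u v :: "'a::bal_algebra"
  assumes "0 \<le> u" "0 \<le> v" "inf u v = 0"
  shows "inf u (of_nat n * v) = 0"
proof (induction n)
  case 0
  show ?case
    using assms by (simp add: inf_absorb2)
next
  case (Suc n)
  have "0 \<le> of_nat n * v"
    using assms(2) bal_of_nat_nonneg by (rule_tac mult_nonneg_nonneg)
  then show ?case
    using inf_add_eq_0[OF assms(1,2) _ assms(3) Suc] by (simp add: algebra_simps)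
qed

text \<open>Here boundedness does the work of the f-ring property.\<close>

lemma disjoint_mult_eq_0:
  fixes u v :: "'a::bal_algebra"
  assumes "0 \<le> u" "0 \<le> v" "inf u v = 0"
  shows "u * v = 0"
proof -
  obtain N :: nat where "sup u v \<le> of_nat N"
    using bal_bounded by blast
  then have "u * v \<le> of_nat N * v" "v * u \<le> of_nat N * u"
    using assms(1,2) by (simp_all add: mult_right_mono)
  then have "u * v \<le> of_nat N * v" "u * v \<le> of_nat N * u"
    by (simp_all add: mult.commute)
  moreover have "inf (of_nat N * v) u = 0"
    using inf_of_nat_mult_eq_0[OF assms, of N] by (simp add: inf_commute)
  then have "inf (of_nat N * v) (of_nat N * u) = 0"
    using inf_of_nat_mult_eq_0[of "of_nat N * v" u N] assms
      mult_nonneg_nonneg[OF bal_of_nat_nonneg assms(2)]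
    by simp
  ultimately have "u * v \<le> 0"
    by (metis le_inf_iff)
  then show ?thesis
    using assms by (simp add: antisym)
qed

lemma bal_square_nonneg: "0 \<le> (y::'a::bal_algebra) * y"
proof -
  have "y * y = (pos y - neg y) * (pos y - neg y)"
    by (simp add: pos_diff_neg)
  also have "\<dots> = pos y * pos y + neg y * neg y - 2 * (pos y * neg y)"
    by (simp add: algebra_simps)
  also have "pos y * neg y = 0"
    by (rule disjoint_mult_eq_0[OF pos_nonneg neg_nonneg inf_pos_neg])
  finally show ?thesis
    by (simp add: pos_nonneg neg_nonneg)
qed

lemma idempotent_nonneg: "p * p = p \<Longrightarrow> 0 \<le> (p::'a::bal_algebra)"
  using bal_square_nonneg[of p] by simp

lemma idempotent_le_one: "p * p = p \<Longrightarrow> p \<le> (1::'a::bal_algebra)"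
  using idempotent_nonneg[of "1 - p"] by (simp add: algebra_simps)

lemma mult_add_mult_one_minus_le:
  fixes p :: "'a::bal_algebra"
  assumes "0 \<le> p" "p \<le> 1" "u \<le> L" "v \<le> L"
  shows "u * p + v * (1 - p) \<le> L"
proof -
  have "u * p + v * (1 - p) \<le> L * p + L * (1 - p)"
    using assms by (intro add_mono mult_right_mono) simp_all
  then show ?thesis
    by (simp add: algebra_simps)
qed

lemma idempotent_mult_one_minus_eq_0:
  fixes p q :: "'a::bal_algebra"
  assumes p: "p * p = p" and q: "q * q = q"
    and le: "r *\<^sub>R p + of_real v \<le> of_real u + m *\<^sub>R q" and "u < r + v"
  shows "p * (1 - q) = 0"
proof -
  define z where "z = p * (1 - q)"
  have "(1 - q) * (1 - q) = 1 - q"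
    using q by (simp add: algebra_simps)
  then have "z * z = z"
    using p unfolding z_def by (metis mult.assoc mult.left_commute)
  then have "0 \<le> z"
    by (rule idempotent_nonneg)
  have pz: "p * z = z"
    using p unfolding z_def by (simp add: mult.assoc[symmetric])
  have qz: "q * z = 0"
    using q unfolding z_def by (simp add: algebra_simps)
  have "(r *\<^sub>R p + of_real v) * z \<le> (of_real u + m *\<^sub>R q) * z"
    using le \<open>0 \<le> z\<close> by (rule mult_right_mono)
  moreover have "(r *\<^sub>R p + of_real v) * z = (r + v) *\<^sub>R z"
    by (simp add: scaleR_conv_of_real distrib_right mult.assoc pz)
  moreover have "(of_real u + m *\<^sub>R q) * z = u *\<^sub>R z"
    by (simp add: scaleR_conv_of_real distrib_right mult.assoc qz)
  ultimately have "(r + v - u) *\<^sub>R z \<le> 0"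
    by (simp add: scaleR_diff_left)
  then have "(1 / (r + v - u)) *\<^sub>R ((r + v - u) *\<^sub>R z) \<le> (1 / (r + v - u)) *\<^sub>R 0"
    using \<open>u < r + v\<close> by (intro bal_scaleR_left_mono) simp_all
  then have "z \<le> 0"
    using \<open>u < r + v\<close> by simp
  with \<open>0 \<le> z\<close> show ?thesis
    unfolding z_def by simp
qed

section \<open>Evaluating polynomials in the generators of R[B]\<close>

definition monomial_value :: "('b \<Rightarrow> 'd::bal_algebra) \<Rightarrow> ('b \<Rightarrow>\<^sub>0 nat) \<Rightarrow> 'd" where
  "monomial_value x m = (\<Prod>e\<in>Poly_Mapping.keys m. x e ^ Poly_Mapping.lookup m e)"

lemma monomial_value_superset:
  "finite K \<Longrightarrow> Poly_Mapping.keys m \<subseteq> K \<Longrightarrow>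
    monomial_value x m = (\<Prod>e\<in>K. x e ^ Poly_Mapping.lookup m e)"
  unfolding monomial_value_def by (rule prod.mono_neutral_left) (auto simp: in_keys_iff)

lemma monomial_value_add: "monomial_value x (m + n) = monomial_value x m * monomial_value x n"
proof -
  let ?K = "Poly_Mapping.keys m \<union> Poly_Mapping.keys n"
  have "monomial_value x (m + n) = (\<Prod>e\<in>?K. x e ^ Poly_Mapping.lookup (m + n) e)"
    by (rule monomial_value_superset) (auto dest: set_mp[OF keys_add])
  also have "\<dots> = (\<Prod>e\<in>?K. x e ^ Poly_Mapping.lookup m e * x e ^ Poly_Mapping.lookup n e)"
    by (simp add: lookup_add power_add)
  also have "\<dots> = monomial_value x m * monomial_value x n"
    by (simp add: prod.distrib monomial_value_superset[of ?K m] monomial_value_superset[of ?K n])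
  finally show ?thesis .
qed

lemma peval_superset:
  "finite K \<Longrightarrow> Poly_Mapping.keys p \<subseteq> K \<Longrightarrow>
    peval x p = (\<Sum>m\<in>K. Poly_Mapping.lookup p m *\<^sub>R monomial_value x m)"
  unfolding peval_def monomial_value_def[symmetric]
  by (rule sum.mono_neutral_left) (auto simp: in_keys_iff)

lemma peval_add: "peval x (p + q) = peval x p + peval x q"
proof -
  let ?K = "Poly_Mapping.keys p \<union> Poly_Mapping.keys q"
  have "peval x (p + q) = (\<Sum>m\<in>?K. Poly_Mapping.lookup (p + q) m *\<^sub>R monomial_value x m)"
    by (rule peval_superset) (auto dest: set_mp[OF keys_add])
  then show ?thesis
    by (simp add: lookup_add scaleR_add_left sum.distrib peval_superset[of ?K p] peval_superset[of ?K q])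
qed

lemma peval_0: "peval x 0 = 0"
  by (simp add: peval_def)

lemma peval_diff: "peval x (p - q) = peval x p - peval x q"
  using peval_add[of x "p - q" q] by (simp add: eq_diff_eq)

lemma peval_single: "peval x (Poly_Mapping.single m c) = c *\<^sub>R monomial_value x m"
  by (cases "c = 0") (simp_all add: peval_def monomial_value_def)

lemma peval_sum: "peval x (sum f K) = (\<Sum>k\<in>K. peval x (f k))"
  by (induction K rule: infinite_finite_induct) (simp_all add: peval_0 peval_add)

lemma poly_mapping_sum_single:
  "p = (\<Sum>m\<in>Poly_Mapping.keys p. Poly_Mapping.single m (Poly_Mapping.lookup p m))"
  by (rule poly_mapping_eqI)
    (simp add: lookup_sum lookup_single when_def in_keys_iff sum.delta'[of "Poly_Mapping.keys p"]
      cong: if_cong)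

lemma peval_mult: "peval x (p * q) = peval x p * peval x q"
proof -
  have "p * q = (\<Sum>m\<in>Poly_Mapping.keys p. \<Sum>n\<in>Poly_Mapping.keys q.
      Poly_Mapping.single m (Poly_Mapping.lookup p m) * Poly_Mapping.single n (Poly_Mapping.lookup q n))"
    by (subst poly_mapping_sum_single[of p], subst poly_mapping_sum_single[of q])
      (simp add: sum_distrib_left sum_distrib_right, rule sum.swap)
  then have "peval x (p * q) = (\<Sum>m\<in>Poly_Mapping.keys p. \<Sum>n\<in>Poly_Mapping.keys q.
      (Poly_Mapping.lookup p m *\<^sub>R monomial_value x m) * (Poly_Mapping.lookup q n *\<^sub>R monomial_value x n))"
    by (simp add: peval_sum mult_single peval_single monomial_value_add mult.commute)
  also have "\<dots> = peval x p * peval x q"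
    unfolding peval_def monomial_value_def[symmetric] by (rule sum_product[symmetric])
  finally show ?thesis .
qed

lemma peval_1: "peval x 1 = 1"
  using peval_single[of x 0 1] by (simp add: monomial_value_def)

lemma peval_pvar: "peval x (pvar e) = x e"
  by (simp add: pvar_def peval_single monomial_value_def)

lemma ideal_gen_superset: "G \<subseteq> ideal_gen G"
  unfolding ideal_gen_def by auto

lemma ideal_gen_least: "ring_ideal J \<Longrightarrow> G \<subseteq> J \<Longrightarrow> ideal_gen G \<subseteq> J"
  unfolding ideal_gen_def by auto

lemma RB_completion_rel_ideal: "RB_completion x \<Longrightarrow> p \<in> rel_ideal \<Longrightarrow> peval x p = 0"
  unfolding RB_completion_def by blast

lemma rel_ideal_generators:
  "pvar (inf e f) - pvar e * pvar f \<in> rel_ideal"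
  "pvar (- e) - (1 - pvar e) \<in> rel_ideal"
  "pvar bot \<in> rel_ideal"
  unfolding rel_ideal_def by (rule set_mp[OF ideal_gen_superset], blast)+

lemma RB_completion_inf: "RB_completion x \<Longrightarrow> x (inf e f) = x e * x f"
  using RB_completion_rel_ideal[OF _ rel_ideal_generators(1)] by (simp add: peval_diff peval_mult peval_pvar)

lemma RB_completion_compl: "RB_completion x \<Longrightarrow> x (- e) = 1 - x e"
  using RB_completion_rel_ideal[OF _ rel_ideal_generators(2)] by (simp add: peval_diff peval_1 peval_pvar)

lemma RB_completion_bot: "RB_completion x \<Longrightarrow> x bot = 0"
  using RB_completion_rel_ideal[OF _ rel_ideal_generators(3)] by (simp add: peval_pvar)

lemma RB_completion_top: "RB_completion x \<Longrightarrow> x top = 1"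
  using RB_completion_compl[of x bot] RB_completion_bot[of x] by simp

lemma RB_completion_idempotent: "RB_completion x \<Longrightarrow> x e * x e = x e"
  using RB_completion_inf[of x e e] by simp

lemma RB_completion_nonneg: "RB_completion x \<Longrightarrow> 0 \<le> x e"
  by (rule idempotent_nonneg[OF RB_completion_idempotent])

lemma RB_completion_le_one: "RB_completion x \<Longrightarrow> x e \<le> 1"
  by (rule idempotent_le_one[OF RB_completion_idempotent])

lemma RB_completion_mono:
  assumes "RB_completion x" "e \<le> f"
  shows "x e \<le> x f"
proof -
  have "x f - x e = x f * x (- e)"
    using RB_completion_inf[OF assms(1), of e f] assms(2)
    by (simp add: RB_completion_compl[OF assms(1)] inf_absorb1 algebra_simps)
  also have "\<dots> = x (inf f (- e))"
    by (simp add: RB_completion_inf[OF assms(1)])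
  finally show ?thesis
    using RB_completion_nonneg[OF assms(1), of "inf f (- e)"] by (metis diff_ge_0_iff_ge)
qed

section \<open>The generators of R[B] are nonzero\<close>

definition proper_filter :: "'b::boolean_algebra set \<Rightarrow> bool" where
  "proper_filter F \<longleftrightarrow> (\<forall>u\<in>F. \<forall>v. u \<le> v \<longrightarrow> v \<in> F) \<and> (\<forall>u\<in>F. \<forall>v\<in>F. inf u v \<in> F) \<and> bot \<notin> F"

lemma proper_filter_adjoin:
  assumes F: "proper_filter F" and "- e \<notin> F"
  shows "proper_filter {v. \<exists>u\<in>F. inf u e \<le> v}"
  unfolding proper_filter_def
proof (intro conjI ballI allI impI)
  fix u v assume "u \<in> {v. \<exists>u\<in>F. inf u e \<le> v}" "u \<le> v"
  then show "v \<in> {v. \<exists>u\<in>F. inf u e \<le> v}"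
    by (auto intro: order_trans)
next
  fix u v assume "u \<in> {v. \<exists>u\<in>F. inf u e \<le> v}" "v \<in> {v. \<exists>u\<in>F. inf u e \<le> v}"
  then obtain u' v' where "u' \<in> F" "v' \<in> F" "inf u' e \<le> u" "inf v' e \<le> v"
    by blast
  moreover from this have "inf (inf u' v') e \<le> inf u v"
    by (meson inf.bounded_iff inf_le1 inf_le2 order_trans)
  ultimately show "inf u v \<in> {v. \<exists>u\<in>F. inf u e \<le> v}"
    using F unfolding proper_filter_def by blast
next
  show "bot \<notin> {v. \<exists>u\<in>F. inf u e \<le> v}"
  proof
    assume "bot \<in> {v. \<exists>u\<in>F. inf u e \<le> v}"
    then obtain u where "u \<in> F" "u \<le> - e"
      by (auto simp: bot_unique inf_shunt)
    then show False
      using F \<open>- e \<notin> F\<close> unfolding proper_filter_def by blast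
  qed
qed

lemma proper_filter_Union_chain:
  assumes "\<C> \<noteq> {}" "subset.chain {F. proper_filter F \<and> w \<in> F} \<C>"
  shows "proper_filter (\<Union>\<C>) \<and> w \<in> \<Union>\<C>"
proof -
  have filters: "\<And>F. F \<in> \<C> \<Longrightarrow> proper_filter F \<and> w \<in> F"
    and chain: "\<And>F G. F \<in> \<C> \<Longrightarrow> G \<in> \<C> \<Longrightarrow> F \<subseteq> G \<or> G \<subseteq> F"
    using assms(2) unfolding subset.chain_def by blast+
  have "inf u v \<in> \<Union>\<C>" if uv: "u \<in> \<Union>\<C>" "v \<in> \<Union>\<C>" for u v
  proof -
    obtain F G where "F \<in> \<C>" "G \<in> \<C>" "u \<in> F" "v \<in> G"
      using uv by blast
    then show ?thesis
      using chain[of F G] filters unfolding proper_filter_def by blast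
  qed
  then show ?thesis
    using filters assms(1) unfolding proper_filter_def by blast
qed

lemma ultrafilter_exists:
  fixes w :: "'b::boolean_algebra"
  assumes "w \<noteq> bot"
  obtains M where "proper_filter M" "w \<in> M" "\<And>e. e \<in> M \<or> - e \<in> M"
proof -
  let ?\<A> = "{F. proper_filter F \<and> w \<in> F}"
  have "{v. w \<le> v} \<in> ?\<A>"
    using assms unfolding proper_filter_def by (auto intro: order_trans simp: bot_unique)
  then have "\<exists>M\<in>?\<A>. \<forall>F\<in>?\<A>. M \<subseteq> F \<longrightarrow> F = M"
    using proper_filter_Union_chain by (intro subset_Zorn_nonempty) blast+
  then obtain M where M: "M \<in> ?\<A>" and max: "\<And>F. F \<in> ?\<A> \<Longrightarrow> M \<subseteq> F \<Longrightarrow> F = M"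
    by blast
  have "e \<in> M \<or> - e \<in> M" for e
  proof (rule ccontr)
    assume "\<not> (e \<in> M \<or> - e \<in> M)"
    moreover define F where "F = {v. \<exists>u\<in>M. inf u e \<le> v}"
    ultimately have "F \<in> ?\<A>" "M \<subseteq> F" "e \<in> F"
      using M proper_filter_adjoin[of M e] unfolding F_def by (auto intro: le_infI1)
    then show False
      using max \<open>\<not> (e \<in> M \<or> - e \<in> M)\<close> by blast
  qed
  then show ?thesis
    using that M by blast
qed

lemma peval_ultrafilter_rel_ideal:
  fixes M :: "'b::boolean_algebra set"
  assumes M: "proper_filter M" "\<And>e. e \<in> M \<or> - e \<in> M" and "p \<in> rel_ideal"
  shows "peval (\<lambda>e. if e \<in> M then 1 else 0 :: 'd::bal_algebra) p = 0"
proof -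
  let ?\<chi> = "\<lambda>e. if e \<in> M then 1 else 0 :: 'd"
  have inf_iff: "inf e f \<in> M \<longleftrightarrow> e \<in> M \<and> f \<in> M" for e f
    using M(1) unfolding proper_filter_def by (meson inf_le1 inf_le2)
  have compl_iff: "- e \<in> M \<longleftrightarrow> e \<notin> M" for e
    using M inf_iff[of e "- e"] unfolding proper_filter_def by auto
  have sup_iff: "sup e f \<in> M \<longleftrightarrow> e \<in> M \<or> f \<in> M" for e f
    using inf_iff[of "- e" "- f"] compl_iff[of "sup e f"] compl_iff[of e] compl_iff[of f] by (simp; blast)
  have "ring_ideal {p. peval ?\<chi> p = 0}"
    unfolding ring_ideal_def by (simp add: peval_0 peval_diff peval_mult)
  moreover have "{pvar (inf e f) - pvar e * pvar f | e f. True} \<union>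
      {pvar (sup e f) - (pvar e + pvar f - pvar e * pvar f) | e f. True} \<union>
      {pvar (- e) - (1 - pvar e) | e. True} \<union> {pvar bot} \<subseteq> {p. peval ?\<chi> p = 0}"
    using M(1) unfolding proper_filter_def
    by (auto simp: peval_diff peval_add peval_mult peval_1 peval_pvar inf_iff sup_iff compl_iff)
  ultimately have "rel_ideal \<subseteq> {p. peval ?\<chi> p = 0}"
    unfolding rel_ideal_def by (rule ideal_gen_least)
  then show ?thesis
    using assms(3) by blast
qed

lemma RB_completion_nonzero:
  fixes x :: "'b::boolean_algebra \<Rightarrow> 'd::bal_algebra"
  assumes x: "RB_completion x" and "w \<noteq> bot"
  shows "x w \<noteq> 0"
proof
  assume "x w = 0"
  then have "pvar w \<in> rel_ideal"
    using x unfolding RB_completion_def by (metis peval_pvar)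
  moreover obtain M where M: "proper_filter M" "w \<in> M" "\<And>e. e \<in> M \<or> - e \<in> M"
    using ultrafilter_exists[OF \<open>w \<noteq> bot\<close>] by blast
  ultimately have "peval (\<lambda>e. if e \<in> M then 1 else 0 :: 'd) (pvar w) = 0"
    by (intro peval_ultrafilter_rel_ideal) blast+
  then show False
    using M(2) by (simp add: peval_pvar)
qed

section \<open>Archimedean \<ell>-ideals\<close>

lemma l_ideal_0: "l_ideal J \<Longrightarrow> 0 \<in> J"
  by (simp add: l_ideal_def ring_ideal_def)

lemma l_ideal_diff: "l_ideal J \<Longrightarrow> a \<in> J \<Longrightarrow> b \<in> J \<Longrightarrow> a - b \<in> J"
  by (simp add: l_ideal_def ring_ideal_def)

lemma l_ideal_mult: "l_ideal J \<Longrightarrow> a \<in> J \<Longrightarrow> c * a \<in> J"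
  by (simp add: l_ideal_def ring_ideal_def)

lemma l_ideal_solid: "l_ideal J \<Longrightarrow> labs a \<le> labs b \<Longrightarrow> b \<in> J \<Longrightarrow> a \<in> J"
  unfolding l_ideal_def by blast

lemma l_ideal_add: "l_ideal J \<Longrightarrow> a \<in> J \<Longrightarrow> b \<in> J \<Longrightarrow> a + b \<in> J"
  using l_ideal_diff[of J a "0 - b"] l_ideal_diff[of J 0 b] l_ideal_0[of J] by simp

lemma l_ideal_scaleR: "l_ideal J \<Longrightarrow> a \<in> J \<Longrightarrow> r *\<^sub>R a \<in> J"
  by (simp add: scaleR_conv_of_real l_ideal_mult)

lemma l_ideal_labs: "l_ideal J \<Longrightarrow> a \<in> J \<Longrightarrow> labs a \<in> J"
  by (rule l_ideal_solid) (simp_all add: labs_of_nonneg labs_nonneg)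

lemma l_ideal_nonneg_le: "l_ideal J \<Longrightarrow> 0 \<le> d \<Longrightarrow> d \<le> w \<Longrightarrow> w \<in> J \<Longrightarrow> d \<in> J"
  by (rule l_ideal_solid[of J d w]) (auto simp: labs_of_nonneg intro: order_trans[OF _ labs_ge])

lemma l_ideal_eq_UNIV:
  fixes w :: "'a::bal_algebra"
  assumes J: "l_ideal J" and "w \<in> J" "of_real \<delta> \<le> w" "0 < \<delta>"
  shows "J = UNIV"
proof -
  have "1 = (1 / \<delta>) *\<^sub>R (of_real \<delta> :: 'a)"
    using \<open>0 < \<delta>\<close> by (simp add: scaleR_conv_of_real flip: of_real_mult)
  also have "\<dots> \<le> (1 / \<delta>) *\<^sub>R w"
    using assms by (intro bal_scaleR_left_mono) simp_all
  finally have "1 \<in> J"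
    using assms bal_zero_le_one l_ideal_scaleR l_ideal_nonneg_le by blast
  then show ?thesis
    using l_ideal_mult[OF J, of 1] by auto
qed

lemma quot_le_0_iff: "l_ideal J \<Longrightarrow> quot_le J x 0 \<longleftrightarrow> pos x \<in> J"
proof
  assume "l_ideal J" "quot_le J x 0"
  then obtain c where "c \<in> J" "x \<le> c"
    unfolding quot_le_def by auto
  then have "pos x \<le> labs c"
    unfolding pos_def using labs_ge[of c] labs_nonneg[of c] by (meson le_sup_iff order_trans)
  then show "pos x \<in> J"
    using l_ideal_nonneg_le[OF \<open>l_ideal J\<close> pos_nonneg _ l_ideal_labs] \<open>c \<in> J\<close> \<open>l_ideal J\<close> by blast
next
  assume "pos x \<in> J"
  then show "quot_le J x 0"
    unfolding quot_le_def using pos_ge[of x] by auto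
qed

lemma arch_ideal_pos_mem:
  "arch_ideal J \<Longrightarrow> (\<And>n. n \<ge> 1 \<Longrightarrow> quot_le J (of_nat n * x) y) \<Longrightarrow> pos x \<in> J"
  unfolding arch_ideal_def using quot_le_0_iff by blast

lemma arch_idealI:
  assumes "l_ideal J"
    and "\<And>x y. (\<And>n. n \<ge> 1 \<Longrightarrow> quot_le J (of_nat n * x) y) \<Longrightarrow> pos x \<in> J"
  shows "arch_ideal J"
  unfolding arch_ideal_def using assms quot_le_0_iff by blast

lemma arch_ideal_UNIV: "arch_ideal (UNIV :: 'a::bal_algebra set)"
  unfolding arch_ideal_def l_ideal_def ring_ideal_def quot_le_def
  by (auto intro: exI[of _ "- _"])

lemma arch_ideal_Inter:
  assumes "\<And>K. K \<in> F \<Longrightarrow> arch_ideal K"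
  shows "arch_ideal (\<Inter>F :: 'a::bal_algebra set)"
proof (rule arch_idealI)
  have "l_ideal K" if "K \<in> F" for K
    using assms that by (simp add: arch_ideal_def)
  then show "l_ideal (\<Inter>F)"
    unfolding l_ideal_def ring_ideal_def using l_ideal_0 l_ideal_diff l_ideal_mult l_ideal_solid by blast
next
  fix x y :: 'a
  assume "\<And>n. n \<ge> 1 \<Longrightarrow> quot_le (\<Inter>F) (of_nat n * x) y"
  then have "\<And>n. n \<ge> 1 \<Longrightarrow> quot_le K (of_nat n * x) y" if "K \<in> F" for K
    using that unfolding quot_le_def by blast
  then show "pos x \<in> \<Inter>F"
    using assms arch_ideal_pos_mem by blast
qed

lemma arch_ideal_arch_gen: "arch_ideal (arch_gen S)"
  unfolding arch_gen_def by (rule arch_ideal_Inter) auto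

lemma arch_gen_superset: "S \<subseteq> arch_gen S"
  unfolding arch_gen_def by auto

lemma arch_gen_least: "arch_ideal K \<Longrightarrow> S \<subseteq> K \<Longrightarrow> arch_gen S \<subseteq> K"
  unfolding arch_gen_def by auto

lemma arch_gen_in_Arch: "arch_gen S \<in> Arch"
  by (simp add: Arch_def arch_ideal_arch_gen)

lemma l_ideal_arch_gen: "l_ideal (arch_gen S)"
  using arch_ideal_arch_gen unfolding arch_ideal_def by blast

lemma arch_join_in_Arch: "arch_join I J \<in> Arch"
  unfolding arch_join_def by (rule arch_gen_in_Arch)

lemma arch_join_upper: "I \<union> J \<subseteq> arch_join I J"
  unfolding arch_join_def by (rule arch_gen_superset)

lemma l_ideal_arch_join: "l_ideal (arch_join I J)"
  unfolding arch_join_def by (rule l_ideal_arch_gen)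

lemma arch_join_least: "arch_ideal K \<Longrightarrow> I \<subseteq> K \<Longrightarrow> J \<subseteq> K \<Longrightarrow> arch_join I J \<subseteq> K"
  unfolding arch_join_def by (simp add: arch_gen_least)

lemma neg_diff_mem_bound:
  fixes b :: "'a::bal_algebra"
  assumes "l_ideal J" "J \<noteq> UNIV" "b \<le> of_nat N" "neg (b - of_real r) \<in> J"
  shows "r < real N + 1"
proof (rule ccontr)
  assume "\<not> r < real N + 1"
  then have "of_real 1 \<le> (of_real r - of_nat N :: 'a)"
    using bal_of_real_mono[of "real N + 1" r, where 'a='a] by (simp add: algebra_simps)
  also have "\<dots> \<le> of_real r - b"
    using assms(3) by simp
  also have "\<dots> \<le> neg (b - of_real r)"
    using neg_ge[of "b - of_real r"] by simp
  finally have "J = UNIV"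
    using l_ideal_eq_UNIV[OF assms(1,4), of 1] by simp
  with assms(2) show False ..
qed

lemma arch_join_arch_gen_eq_UNIV:
  fixes b :: "'a::bal_algebra"
  assumes "neg (b - of_real r) \<in> J" "b - of_real u \<le> c" "u < r"
  shows "arch_join J (arch_gen {c}) = UNIV"
proof (rule l_ideal_eq_UNIV[OF l_ideal_arch_join])
  show "neg (b - of_real r) + c \<in> arch_join J (arch_gen {c})"
    using assms(1) arch_join_upper[of J "arch_gen {c}"] arch_gen_superset[of "{c}"]
    by (intro l_ideal_add[OF l_ideal_arch_join]) auto
  have "of_real (r - u) = (of_real r - b) + (b - of_real u)"
    by (simp add: algebra_simps)
  also have "\<dots> \<le> neg (b - of_real r) + c"
    using neg_ge[of "b - of_real r"] assms(2) by (intro add_mono) simp_all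
  finally show "of_real (r - u) \<le> neg (b - of_real r) + c" .
  show "0 < r - u"
    using assms(3) by simp
qed

section \<open>The cut of a in I\<close>

lemma neg_diff_of_real_mem_mono:
  fixes a :: "'a::bal_algebra"
  assumes "l_ideal J" "neg (a - of_real r) \<in> J" "t \<le> r"
  shows "neg (a - of_real t) \<in> J"
proof -
  have "neg (a - of_real t) \<le> neg (a - of_real r)"
    using bal_of_real_mono[OF assms(3)] by (intro neg_antimono) simp
  then show ?thesis
    using l_ideal_nonneg_le[OF assms(1) neg_nonneg] assms(2) by blast
qed

lemma of_nat_mult_of_real_divide:
  assumes "n \<noteq> 0"
  shows "of_nat n * of_real (r / real n) = (of_real r :: 'a::real_algebra_1)"
proof -
  have "of_nat n * of_real (r / real n) = (of_real (real n * (r / real n)) :: 'a)"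
    by (simp only: of_real_mult of_real_of_nat_eq)
  then show ?thesis
    using assms by simp
qed

lemma neg_diff_mem_iff_le_Sup:
  fixes a :: "'a::bal_algebra"
  assumes I: "arch_ideal I" "I \<noteq> UNIV" and "0 \<le> a"
  shows "neg (a - of_real r) \<in> I \<longleftrightarrow> r \<le> Sup {r. neg (a - of_real r) \<in> I}"
proof -
  define T where "T = {r. neg (a - of_real r) \<in> I}"
  define s where "s = Sup T"
  have LI: "l_ideal I"
    using I by (simp add: arch_ideal_def)
  have "0 \<in> T"
    unfolding T_def using neg_eq_0[OF \<open>0 \<le> a\<close>] l_ideal_0[OF LI] by simp
  obtain N :: nat where "a \<le> of_nat N"
    using bal_bounded by blast
  then have "t \<le> real N + 1" if "t \<in> T" for t
    using neg_diff_mem_bound[OF LI I(2)] that unfolding T_def by fastforce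
  then have "bdd_above T"
    by (rule bdd_aboveI)
  then have le_s: "t \<le> s" if "t \<in> T" for t
    using that unfolding s_def by (rule cSup_upper[rotated])
  have "neg (a - of_real s) \<in> I"
  proof -
    let ?d = "neg (a - of_real s)"
    have "quot_le I (of_nat n * ?d) 1" if "n \<ge> 1" for n :: nat
    proof -
      obtain t where "t \<in> T" "s - 1 / real n < t"
        using less_cSupD[of T "s - 1 / real n"] \<open>0 \<in> T\<close> \<open>n \<ge> 1\<close> unfolding s_def by fastforce
      then have i: "neg (a - of_real (s - 1 / real n)) \<in> I"
        unfolding T_def using neg_diff_of_real_mem_mono[OF LI] by (meson less_imp_le mem_Collect_eq)
      have "?d = neg ((a - of_real (s - 1 / real n)) - of_real (1 / real n))"
        by (simp add: algebra_simps)
      also have "\<dots> \<le> neg (a - of_real (s - 1 / real n)) + of_real (1 / real n)"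
        by (rule neg_diff_le) (simp add: bal_of_real_nonneg)
      finally have "of_nat n * ?d \<le> of_nat n * (neg (a - of_real (s - 1 / real n)) + of_real (1 / real n))"
        by (simp add: mult_left_mono bal_of_nat_nonneg)
      also have "\<dots> = 1 + of_nat n * neg (a - of_real (s - 1 / real n))"
        using \<open>n \<ge> 1\<close> by (simp add: distrib_left of_nat_mult_of_real_divide)
      finally show ?thesis
        unfolding quot_le_def using l_ideal_mult[OF LI i] by blast
    qed
    then have "pos ?d \<in> I"
      by (rule arch_ideal_pos_mem[OF I(1)])
    then show ?thesis
      by (simp add: pos_def neg_nonneg sup_absorb1)
  qed
  then show ?thesis
    using le_s neg_diff_of_real_mem_mono[OF LI] unfolding T_def s_def by blast
qed

section \<open>The join of I with the positive part at the supremum\<close>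

text \<open>An explicit archimedean \<open>\<ell>\<close>-ideal containing I and c; the slack \<open>\<epsilon>\<close> is what makes it
  archimedean.\<close>

definition approx_ideal :: "'a::bal_algebra set \<Rightarrow> 'a \<Rightarrow> 'a set" where
  "approx_ideal I c = {d. \<forall>\<epsilon>>0. \<exists>n::nat. \<exists>i\<in>I. labs d \<le> of_real \<epsilon> + of_nat n * c + i}"

lemma approx_idealD:
  "d \<in> approx_ideal I c \<Longrightarrow> 0 < \<epsilon> \<Longrightarrow> \<exists>n::nat. \<exists>i\<in>I. labs d \<le> of_real \<epsilon> + of_nat n * c + i"
  unfolding approx_ideal_def by blast

lemma approx_ideal_diff:
  assumes I: "l_ideal I" and "d \<in> approx_ideal I c" "d' \<in> approx_ideal I c"
  shows "d - d' \<in> approx_ideal I c"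
  unfolding approx_ideal_def
proof (intro CollectI allI impI)
  fix \<epsilon> :: real assume "0 < \<epsilon>"
  then obtain n i n' i' where "i \<in> I" "labs d \<le> of_real (\<epsilon> / 2) + of_nat n * c + i"
    and "i' \<in> I" "labs d' \<le> of_real (\<epsilon> / 2) + of_nat n' * c + i'"
    using approx_idealD[OF assms(2), of "\<epsilon> / 2"] approx_idealD[OF assms(3), of "\<epsilon> / 2"] by auto
  then have "labs (d - d') \<le> (of_real (\<epsilon> / 2) + of_nat n * c + i) + (of_real (\<epsilon> / 2) + of_nat n' * c + i')"
    using labs_diff_le[of d d'] by (meson add_mono order_trans)
  also have "\<dots> = of_real \<epsilon> + of_nat (n + n') * c + (i + i')"
    by (simp add: algebra_simps flip: of_real_add)
  finally show "\<exists>n::nat. \<exists>i\<in>I. labs (d - d') \<le> of_real \<epsilon> + of_nat n * c + i"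
    using l_ideal_add[OF I \<open>i \<in> I\<close> \<open>i' \<in> I\<close>] by blast
qed

lemma approx_ideal_mult:
  assumes I: "l_ideal I" and d: "d \<in> approx_ideal I c"
  shows "b * d \<in> approx_ideal I c"
  unfolding approx_ideal_def
proof (intro CollectI allI impI)
  fix \<epsilon> :: real assume "0 < \<epsilon>"
  obtain N :: nat where N: "N \<ge> 1" "labs b \<le> of_nat N"
    using bal_bounded by blast
  then obtain n i where "i \<in> I" and i: "labs d \<le> of_real (\<epsilon> / N) + of_nat n * c + i"
    using approx_idealD[OF d, of "\<epsilon> / N"] \<open>0 < \<epsilon>\<close> by auto
  have "labs (b * d) \<le> of_nat N * labs d"
    using labs_mult_le[of b d] mult_right_mono[OF N(2) labs_nonneg] by (rule order_trans)
  also have "\<dots> \<le> of_nat N * (of_real (\<epsilon> / N) + of_nat n * c + i)"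
    using i bal_of_nat_nonneg by (rule mult_left_mono)
  also have "\<dots> = of_nat N * of_real (\<epsilon> / N) + of_nat (N * n) * c + of_nat N * i"
    by (simp add: algebra_simps)
  also have "of_nat N * of_real (\<epsilon> / N) = of_real \<epsilon>"
    using N(1) by (simp add: of_nat_mult_of_real_divide)
  finally show "\<exists>n::nat. \<exists>i\<in>I. labs (b * d) \<le> of_real \<epsilon> + of_nat n * c + i"
    using l_ideal_mult[OF I \<open>i \<in> I\<close>] by blast
qed

lemma approx_ideal_superset:
  assumes "l_ideal I"
  shows "I \<subseteq> approx_ideal I c"
proof (unfold approx_ideal_def, intro subsetI CollectI allI impI)
  fix d \<epsilon> :: real
  fix i assume "i \<in> I" and "0 < \<epsilon>"
  then have "labs i \<le> of_real \<epsilon> + of_nat 0 * c + labs i"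
    by (simp add: bal_of_real_nonneg)
  then show "\<exists>n::nat. \<exists>j\<in>I. labs i \<le> of_real \<epsilon> + of_nat n * c + j"
    using l_ideal_labs[OF assms \<open>i \<in> I\<close>] by blast
qed

lemma approx_ideal_gen:
  assumes "l_ideal I" "0 \<le> c"
  shows "c \<in> approx_ideal I c"
proof (unfold approx_ideal_def, intro CollectI allI impI)
  fix \<epsilon> :: real assume "0 < \<epsilon>"
  then have "labs c \<le> of_real \<epsilon> + of_nat 1 * c + 0"
    using assms(2) by (simp add: labs_of_nonneg bal_of_real_nonneg)
  then show "\<exists>n::nat. \<exists>i\<in>I. labs c \<le> of_real \<epsilon> + of_nat n * c + i"
    using l_ideal_0[OF assms(1)] by blast
qed

lemma l_ideal_approx_ideal:
  assumes "l_ideal I"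
  shows "l_ideal (approx_ideal I c)"
  unfolding l_ideal_def ring_ideal_def
proof (intro conjI ballI allI impI)
  show "0 \<in> approx_ideal I c"
    using approx_ideal_superset[OF assms] l_ideal_0[OF assms] by blast
  show "d - d' \<in> approx_ideal I c" if "d \<in> approx_ideal I c" "d' \<in> approx_ideal I c" for d d'
    using approx_ideal_diff[OF assms that] .
  show "b * d \<in> approx_ideal I c" if "d \<in> approx_ideal I c" for b d
    using approx_ideal_mult[OF assms that] .
  show "d \<in> approx_ideal I c" if dd': "labs d \<le> labs d' \<and> d' \<in> approx_ideal I c" for d d'
  proof (unfold approx_ideal_def, intro CollectI allI impI)
    fix \<epsilon> :: real assume "0 < \<epsilon>"
    then obtain n i where "i \<in> I" "labs d' \<le> of_real \<epsilon> + of_nat n * c + i"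
      using approx_idealD[of d' I c \<epsilon>] dd' by blast
    then show "\<exists>n::nat. \<exists>i\<in>I. labs d \<le> of_real \<epsilon> + of_nat n * c + i"
      using order_trans[of "labs d" "labs d'"] dd' by blast
  qed
qed

lemma arch_ideal_approx_ideal:
  assumes I: "l_ideal I"
  shows "arch_ideal (approx_ideal I c)"
proof (rule arch_idealI[OF l_ideal_approx_ideal[OF I]])
  fix x y :: 'a
  assume mult_le: "\<And>n. n \<ge> 1 \<Longrightarrow> quot_le (approx_ideal I c) (of_nat n * x) y"
  show "pos x \<in> approx_ideal I c"
  proof (unfold approx_ideal_def, intro CollectI allI impI)
    fix \<epsilon> :: real assume "0 < \<epsilon>"
    obtain M :: nat where "y \<le> of_real (real M)"
      using bal_bounded by (metis of_real_of_nat_eq)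
    define n :: nat where "n = nat \<lceil>2 * M / \<epsilon>\<rceil> + 1"
    have "n \<ge> 1"
      by (simp add: n_def)
    have "2 * M / \<epsilon> \<le> real n"
      unfolding n_def by linarith
    then have "1 / real n * real M \<le> \<epsilon> / 2"
      using \<open>0 < \<epsilon>\<close> \<open>n \<ge> 1\<close> by (simp add: field_simps)
    obtain k where "k \<in> approx_ideal I c" "of_nat n * x \<le> y + k"
      using mult_le[OF \<open>n \<ge> 1\<close>] unfolding quot_le_def by blast
    then obtain m i where "i \<in> I" and k: "labs k \<le> of_real (\<epsilon> / 2) + of_nat m * c + i"
      using approx_idealD[of k I c "\<epsilon> / 2"] \<open>0 < \<epsilon>\<close> by auto
    have "real n *\<^sub>R x \<le> of_real (real M) + labs k"
      using \<open>of_nat n * x \<le> y + k\<close> add_mono[OF \<open>y \<le> of_real (real M)\<close> labs_ge[of k]]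
      by (simp add: of_nat_mult_eq_scaleR)
    then have "(1 / real n) *\<^sub>R (real n *\<^sub>R x) \<le> (1 / real n) *\<^sub>R (of_real (real M) + labs k)"
      by (rule bal_scaleR_left_mono) simp
    then have "x \<le> of_real (1 / real n * real M) + (1 / real n) *\<^sub>R labs k"
      using \<open>n \<ge> 1\<close> by (simp add: scaleR_add_right scaleR_of_real del: of_real_of_nat_eq)
    also have "\<dots> \<le> of_real (\<epsilon> / 2) + 1 *\<^sub>R labs k"
      using \<open>1 / real n * real M \<le> \<epsilon> / 2\<close> \<open>n \<ge> 1\<close> labs_nonneg[of k]
      by (intro add_mono bal_of_real_mono bal_scaleR_right_mono) simp_all
    finally have "x \<le> of_real (\<epsilon> / 2) + labs k"
      by simp
    moreover have "0 \<le> of_real (\<epsilon> / 2) + labs k"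
      using \<open>0 < \<epsilon>\<close> by (simp add: add_nonneg_nonneg bal_of_real_nonneg labs_nonneg)
    ultimately have "labs (pos x) \<le> of_real (\<epsilon> / 2) + labs k"
      by (simp add: labs_of_nonneg pos_nonneg pos_def)
    also have "\<dots> \<le> of_real (\<epsilon> / 2) + (of_real (\<epsilon> / 2) + of_nat m * c + i)"
      using k by (rule add_left_mono)
    also have "\<dots> = of_real (\<epsilon> / 2 + \<epsilon> / 2) + of_nat m * c + i"
      by (simp only: of_real_add add.assoc)
    also have "\<epsilon> / 2 + \<epsilon> / 2 = \<epsilon>"
      by simp
    finally show "\<exists>m::nat. \<exists>i\<in>I. labs (pos x) \<le> of_real \<epsilon> + of_nat m * c + i"
      using \<open>i \<in> I\<close> by blast
  qed
qed

lemma one_notin_approx_ideal: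
  fixes a :: "'a::bal_algebra"
  assumes I: "l_ideal I" and cut: "\<And>r. neg (a - of_real r) \<in> I \<longleftrightarrow> r \<le> s"
  shows "1 \<notin> approx_ideal I (pos (a - of_real s))"
proof
  let ?c = "pos (a - of_real s)"
  assume "1 \<in> approx_ideal I ?c"
  then obtain n i where "i \<in> I" and one: "1 \<le> of_real (1 / 2) + of_nat n * ?c + i"
    using approx_idealD[of 1 I ?c "1 / 2"] by (auto simp: labs_of_nonneg bal_zero_le_one)
  define m where "m = real n + 1"
  have "0 < m"
    by (simp add: m_def)
  have "of_real (1 / 2) + of_real (1 / 2) \<le> of_real (1 / 2) + (of_nat n * ?c + i)"
    using one by (simp add: add.assoc flip: of_real_add)
  then have "of_real (1 / 2) \<le> of_nat n * ?c + i"
    by (simp only: add_le_cancel_left)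
  also have "\<dots> \<le> m *\<^sub>R ?c + i"
    using bal_scaleR_right_mono[of "real n" m ?c] pos_nonneg[of "a - of_real s"]
    by (simp add: m_def of_nat_mult_eq_scaleR)
  finally have "(1 / m) *\<^sub>R of_real (1 / 2) \<le> (1 / m) *\<^sub>R (m *\<^sub>R ?c + i)"
    using \<open>0 < m\<close> by (intro bal_scaleR_left_mono) simp_all
  then have small: "of_real (1 / (2 * m)) \<le> ?c + (1 / m) *\<^sub>R i"
    using \<open>0 < m\<close> by (simp add: scaleR_of_real scaleR_add_right mult.commute)
  \<comment> \<open>so the cut would contain \<open>s + 1 / (2 m)\<close>\<close>
  define w where "w = neg (a - of_real s) + labs ((1 / m) *\<^sub>R i)"
  have "w \<in> I"
    unfolding w_def using cut[of s] l_ideal_add[OF I] l_ideal_labs[OF I l_ideal_scaleR[OF I \<open>i \<in> I\<close>]] by blast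
  have "of_real (s + 1 / (2 * m)) - a = of_real (1 / (2 * m)) - (a - of_real s)"
    by (simp add: algebra_simps)
  also have "\<dots> \<le> ?c + (1 / m) *\<^sub>R i - (a - of_real s)"
    using small by simp
  also have "\<dots> = neg (a - of_real s) + (1 / m) *\<^sub>R i"
    by (simp flip: add_neg_eq_pos)
  also have "\<dots> \<le> w"
    unfolding w_def by (simp add: labs_ge)
  finally have "neg (a - of_real (s + 1 / (2 * m))) \<le> w"
    unfolding neg_def w_def by (simp add: neg_nonneg labs_nonneg add_nonneg_nonneg)
  then have "neg (a - of_real (s + 1 / (2 * m))) \<in> I"
    using l_ideal_nonneg_le[OF I neg_nonneg _ \<open>w \<in> I\<close>] by blast
  then have "s + 1 / (2 * m) \<le> s"
    by (rule cut[THEN iffD1])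
  with \<open>0 < m\<close> show False
    by simp
qed

lemma arch_join_arch_gen_pos_ne_UNIV:
  fixes a :: "'a::bal_algebra"
  assumes I: "arch_ideal I" and cut: "\<And>r. neg (a - of_real r) \<in> I \<longleftrightarrow> r \<le> s"
  shows "arch_join I (arch_gen {pos (a - of_real s)}) \<noteq> UNIV"
proof -
  let ?c = "pos (a - of_real s)"
  have "l_ideal I"
    using I by (simp add: arch_ideal_def)
  then have "arch_join I (arch_gen {?c}) \<subseteq> approx_ideal I ?c"
    by (intro arch_join_least arch_gen_least arch_ideal_approx_ideal approx_ideal_superset)
      (simp_all add: approx_ideal_gen pos_nonneg)
  then show ?thesis
    using one_notin_approx_ideal[OF \<open>l_ideal I\<close> cut] by blast
qed

section \<open>The map \<alpha>\<close>

lemma free_bool_ext_top: "free_bool_ext e \<Longrightarrow> e UNIV = top"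
  by (simp add: free_bool_ext_def)

lemma free_bool_ext_arch_gen_empty: "free_bool_ext e \<Longrightarrow> e (arch_gen {}) = bot"
  by (simp add: free_bool_ext_def)

lemma free_bool_ext_arch_join:
  "free_bool_ext e \<Longrightarrow> I \<in> Arch \<Longrightarrow> J \<in> Arch \<Longrightarrow> e (arch_join I J) = sup (e I) (e J)"
  by (simp add: free_bool_ext_def)

lemma free_bool_ext_compl_ne_bot:
  assumes "free_bool_ext e" "J \<in> Arch" "J \<noteq> UNIV"
  shows "- e J \<noteq> bot"
proof -
  have "UNIV \<in> Arch"
    by (simp add: Arch_def arch_ideal_UNIV)
  then have "e J \<noteq> top"
    using assms inj_onD[of e Arch J UNIV] unfolding free_bool_ext_def by auto
  then show ?thesis
    by (metis compl_bot_eq double_compl)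
qed

lemma RB_completion_compl_le:
  assumes e: "free_bool_ext e" and x: "RB_completion x"
    and "J \<in> Arch" "K \<in> Arch" "arch_join J K = UNIV"
  shows "x (- e J) \<le> x (e K)"
proof -
  have "sup (e J) (e K) = top"
    using free_bool_ext_arch_join[OF e assms(3,4)] assms(5) free_bool_ext_top[OF e] by simp
  then show ?thesis
    by (intro RB_completion_mono[OF x]) (simp add: sup_shunt)
qed

lemma RB_completion_compl_ne_0:
  "free_bool_ext e \<Longrightarrow> RB_completion x \<Longrightarrow> J \<in> Arch \<Longrightarrow> J \<noteq> UNIV \<Longrightarrow> x (- e J) \<noteq> 0"
  by (intro RB_completion_nonzero free_bool_ext_compl_ne_bot)

lemma lub_eqI: "is_lub l S \<Longrightarrow> lub S = (l::'d::order)"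
  unfolding lub_def by (rule the_equality) (auto simp: is_lub_def intro: antisym)

text \<open>The family whose join defines \<open>\<alpha> a\<close>, after shifting a to \<open>b = a + s \<ge> 0\<close>.\<close>

definition alpha_set :: "('a::bal_algebra set \<Rightarrow> 'b::boolean_algebra) \<Rightarrow> ('b \<Rightarrow> 'd::bal_algebra)
    \<Rightarrow> 'a \<Rightarrow> 'd set" where
  "alpha_set e x b = {r *\<^sub>R x (- e J) | r J. J \<in> Arch \<and> neg (b - of_real r) \<in> J}"

lemma alpha_shift:
  fixes a :: "'a::bal_algebra"
  obtains s where "0 \<le> a + of_real s"
    and "alpha e x a = of_real (- s) + lub (alpha_set e x (a + of_real s))"
proof -
  obtain n :: nat where "- a \<le> of_nat n"
    using bal_bounded by blast
  then have "0 \<le> a + of_real (real n)"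
    using add_left_mono[of "- a" "of_nat n" a] by simp
  then have "0 \<le> a + of_real (SOME s. 0 \<le> a + of_real s)"
    by (rule someI)
  then show ?thesis
    using that unfolding alpha_def alpha_set_def Let_def by blast
qed

lemma scaleR_RB_completion_le:
  fixes b :: "'a::bal_algebra"
  assumes e: "free_bool_ext e" and x: "RB_completion x"
    and "J \<in> Arch" "neg (b - of_real r) \<in> J" "b \<le> of_nat N"
  shows "r *\<^sub>R x (- e J) \<le> (real N + 1) *\<^sub>R x (- e J)"
proof (cases "J = UNIV")
  case True
  then show ?thesis
    by (simp add: free_bool_ext_top[OF e] RB_completion_bot[OF x])
next
  case False
  moreover have "l_ideal J"
    using assms(3) by (simp add: Arch_def arch_ideal_def)
  ultimately have "r < real N + 1"
    using neg_diff_mem_bound assms(4,5) by blast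
  then show ?thesis
    by (intro bal_scaleR_right_mono) (simp_all add: RB_completion_nonneg[OF x])
qed

lemma is_lub_alpha_set:
  fixes x :: "'b::boolean_algebra \<Rightarrow> 'd::bal_algebra"
  assumes e: "free_bool_ext e" and x: "RB_completion x"
  shows "is_lub (lub (alpha_set e x b)) (alpha_set e x b)"
proof -
  obtain N :: nat where "b \<le> of_nat N"
    using bal_bounded by blast
  have "y \<le> (real N + 1) *\<^sub>R 1" if y: "y \<in> alpha_set e x b" for y
  proof -
    obtain r J where "y = r *\<^sub>R x (- e J)" "J \<in> Arch" "neg (b - of_real r) \<in> J"
      using y unfolding alpha_set_def by blast
    then have "y \<le> (real N + 1) *\<^sub>R x (- e J)"
      using scaleR_RB_completion_le[OF e x _ _ \<open>b \<le> of_nat N\<close>] by blast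
    also have "\<dots> \<le> (real N + 1) *\<^sub>R 1"
      by (intro bal_scaleR_left_mono RB_completion_le_one[OF x]) simp
    finally show ?thesis .
  qed
  moreover have "0 \<in> alpha_set e x b"
    unfolding alpha_set_def
    by (auto intro!: exI[of _ 0] exI[of _ UNIV] simp: Arch_def arch_ideal_UNIV)
  moreover have "dedekind_complete TYPE('d)"
    using x unfolding RB_completion_def by blast
  ultimately obtain l where "is_lub l (alpha_set e x b)"
    unfolding dedekind_complete_def by blast
  then show ?thesis
    by (simp add: lub_eqI)
qed

text \<open>Terms with \<open>r \<le> u\<close> are at most u; for \<open>r > u\<close> the ideal J together with c is
  everything, so \<open>x (- e J) \<le> x (e [[c]])\<close>.\<close>

lemma alpha_set_le:
  fixes b :: "'a::bal_algebra"
  assumes e: "free_bool_ext e" and x: "RB_completion x"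
    and "0 \<le> u" "b - of_real u \<le> c" "b \<le> of_nat N" "y \<in> alpha_set e x b"
  shows "y \<le> of_real u + (real N + 1) *\<^sub>R x (e (arch_gen {c}))"
proof -
  obtain r J where y: "y = r *\<^sub>R x (- e J)" and J: "J \<in> Arch" "neg (b - of_real r) \<in> J"
    using assms(6) unfolding alpha_set_def by blast
  have C: "0 \<le> (real N + 1) *\<^sub>R x (e (arch_gen {c}))"
    by (simp add: bal_scale_nonneg RB_completion_nonneg[OF x])
  show ?thesis
  proof (cases "r \<le> u")
    case True
    have "y \<le> max r 0 *\<^sub>R x (- e J)"
      unfolding y by (intro bal_scaleR_right_mono) (simp_all add: RB_completion_nonneg[OF x])
    also have "\<dots> \<le> max r 0 *\<^sub>R 1"
      by (intro bal_scaleR_left_mono) (simp_all add: RB_completion_le_one[OF x])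
    also have "\<dots> \<le> of_real u"
      using True \<open>0 \<le> u\<close> by (simp add: of_real_def bal_scaleR_right_mono bal_zero_le_one)
    finally show ?thesis
      using C by (simp add: add_increasing2)
  next
    case False
    have "x (- e J) \<le> x (e (arch_gen {c}))"
      using False arch_join_arch_gen_eq_UNIV[OF J(2) assms(4)]
      by (intro RB_completion_compl_le[OF e x J(1) arch_gen_in_Arch]) simp
    then have "(real N + 1) *\<^sub>R x (- e J) \<le> (real N + 1) *\<^sub>R x (e (arch_gen {c}))"
      by (rule bal_scaleR_left_mono) simp
    then have "y \<le> (real N + 1) *\<^sub>R x (e (arch_gen {c}))"
      using scaleR_RB_completion_le[OF e x J assms(5)] unfolding y by (rule order_trans[rotated])
    then show ?thesis
      by (rule add_increasing[OF bal_of_real_nonneg[OF \<open>0 \<le> u\<close>]])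
  qed
qed

lemma scaleR_RB_completion_le_alpha:
  fixes a :: "'a::bal_algebra"
  assumes e: "free_bool_ext e" and x: "RB_completion x"
    and "0 \<le> a" "I \<in> Arch" "neg (a - of_real r) \<in> I"
  shows "r *\<^sub>R x (- e I) \<le> alpha e x a"
proof -
  obtain s where "0 \<le> a + of_real s"
    and alpha: "alpha e x a = of_real (- s) + lub (alpha_set e x (a + of_real s))"
    by (rule alpha_shift)
  define L where "L = lub (alpha_set e x (a + of_real s))"
  let ?p = "x (- e I)"
  have upper: "y \<le> L" if "y \<in> alpha_set e x (a + of_real s)" for y
    using is_lub_alpha_set[OF e x] that unfolding L_def is_lub_def by blast
  have "neg (a + of_real s - of_real (r + s)) \<in> I"
    using assms(5) by (simp add: algebra_simps)
  then have "(r + s) *\<^sub>R ?p \<in> alpha_set e x (a + of_real s)"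
    using assms(4) unfolding alpha_set_def by blast
  moreover have "neg (a + of_real s - of_real s) \<in> arch_gen {}"
    using neg_eq_0[OF \<open>0 \<le> a\<close>] l_ideal_0[OF l_ideal_arch_gen] by simp
  then have "s *\<^sub>R x (- e (arch_gen {})) \<in> alpha_set e x (a + of_real s)"
    unfolding alpha_set_def using arch_gen_in_Arch by blast
  then have "of_real s \<in> alpha_set e x (a + of_real s)"
    by (simp add: free_bool_ext_arch_gen_empty[OF e] RB_completion_top[OF x] of_real_def)
  ultimately have "((r + s) *\<^sub>R ?p) * ?p + of_real s * (1 - ?p) \<le> L"
    by (intro mult_add_mult_one_minus_le upper RB_completion_nonneg[OF x] RB_completion_le_one[OF x])
  also have "((r + s) *\<^sub>R ?p) * ?p + of_real s * (1 - ?p) = r *\<^sub>R ?p + of_real s"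
    using RB_completion_idempotent[OF x, of "- e I"]
    by (simp add: mult_scaleR_left scaleR_add_left algebra_simps scaleR_conv_of_real)
  finally show ?thesis
    unfolding alpha L_def by (simp add: algebra_simps)
qed

lemma le_cut_if_scaleR_RB_completion_le_alpha:
  fixes a :: "'a::bal_algebra"
  assumes e: "free_bool_ext e" and x: "RB_completion x" and I: "I \<in> Arch"
    and cut: "\<And>r. neg (a - of_real r) \<in> I \<longleftrightarrow> r \<le> s"
    and le: "r *\<^sub>R x (- e I) \<le> alpha e x a"
  shows "r \<le> s"
proof (rule ccontr)
  assume "\<not> r \<le> s"
  define t where "t = (s + r) / 2"
  have "s < t" "t < r"
    using \<open>\<not> r \<le> s\<close> by (simp_all add: t_def)
  obtain s0 where "0 \<le> a + of_real s0"
    and alpha: "alpha e x a = of_real (- s0) + lub (alpha_set e x (a + of_real s0))"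
    by (rule alpha_shift)
  have "l_ideal I"
    using I by (simp add: Arch_def arch_ideal_def)
  then have "- s0 \<le> s"
    using cut[of "- s0"] neg_eq_0[OF \<open>0 \<le> a + of_real s0\<close>] l_ideal_0[of I] by simp
  define C where "C = arch_gen {pos (a - of_real s)}"
  obtain N :: nat where "a + of_real s0 \<le> of_nat N"
    using bal_bounded by blast
  have "a + of_real s0 - of_real (t + s0) \<le> pos (a - of_real s)"
    using add_mono[OF bal_of_real_mono[of s t] pos_ge[of "a - of_real s"]] \<open>s < t\<close>
    by (simp add: algebra_simps)
  moreover have "0 \<le> t + s0"
    using \<open>- s0 \<le> s\<close> \<open>s < t\<close> by simp
  ultimately have "y \<le> of_real (t + s0) + (real N + 1) *\<^sub>R x (e C)"
    if "y \<in> alpha_set e x (a + of_real s0)" for y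
    unfolding C_def using alpha_set_le[OF e x _ _ \<open>a + of_real s0 \<le> of_nat N\<close> that] by blast
  then have lub_le: "lub (alpha_set e x (a + of_real s0)) \<le> of_real (t + s0) + (real N + 1) *\<^sub>R x (e C)"
    using is_lub_alpha_set[OF e x] unfolding is_lub_def by blast
  have "r *\<^sub>R x (- e I) + of_real s0 \<le> lub (alpha_set e x (a + of_real s0))"
    using le unfolding alpha by (simp add: algebra_simps)
  also note lub_le
  finally have "r *\<^sub>R x (- e I) + of_real s0 \<le> of_real (t + s0) + (real N + 1) *\<^sub>R x (e C)" .
  then have "x (- e I) * (1 - x (e C)) = 0"
    by (rule idempotent_mult_one_minus_eq_0[OF RB_completion_idempotent[OF x] RB_completion_idempotent[OF x]])
      (use \<open>t < r\<close> in simp)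
  moreover have "x (- e I) * (1 - x (e C)) = x (- e (arch_join I C))"
    using free_bool_ext_arch_join[OF e I arch_gen_in_Arch, of "{pos (a - of_real s)}"]
    by (simp add: C_def RB_completion_inf[OF x] RB_completion_compl[OF x])
  moreover have "x (- e (arch_join I C)) \<noteq> 0"
    using I arch_join_arch_gen_pos_ne_UNIV[OF _ cut] unfolding C_def
    by (intro RB_completion_compl_ne_0[OF e x arch_join_in_Arch]) (simp add: Arch_def)
  ultimately show False
    by simp
qed

theorem lemmaA6:
  fixes a :: "'a::bal_algebra" and I :: "'a set"
    and e :: "'a set \<Rightarrow> 'b::boolean_algebra" and x :: "'b \<Rightarrow> 'd::bal_algebra"
  assumes "free_bool_ext e"
    and "RB_completion x"
    and "0 \<le> a"
    and "I \<in> Arch - {UNIV}"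
  shows "neg (a - of_real (Sup {r::real. neg (a - of_real r) \<in> I})) \<in> I
    \<and> (\<forall>r::real. r *\<^sub>R x (- e I) \<le> alpha e x a \<longleftrightarrow> neg (a - of_real r) \<in> I)
    \<and> Sup {r::real. neg (a - of_real r) \<in> I} = Sup {r::real. r *\<^sub>R x (- e I) \<le> alpha e x a}
    \<and> arch_join I (arch_gen {pos (a - of_real (Sup {r::real. neg (a - of_real r) \<in> I}))}) \<noteq> UNIV"
proof -
  have I: "I \<in> Arch" "arch_ideal I" "I \<noteq> UNIV"
    using assms(4) by (auto simp: Arch_def)
  define s where "s = Sup {r::real. neg (a - of_real r) \<in> I}"
  have cut: "neg (a - of_real r) \<in> I \<longleftrightarrow> r \<le> s" for r
    unfolding s_def by (rule neg_diff_mem_iff_le_Sup[OF I(2,3) assms(3)])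
  have part2: "r *\<^sub>R x (- e I) \<le> alpha e x a \<longleftrightarrow> neg (a - of_real r) \<in> I" for r
    using scaleR_RB_completion_le_alpha[OF assms(1-3) I(1)]
      le_cut_if_scaleR_RB_completion_le_alpha[OF assms(1,2) I(1) cut] cut by blast
  then have "{r. neg (a - of_real r) \<in> I} = {r. r *\<^sub>R x (- e I) \<le> alpha e x a}"
    by blast
  moreover have "arch_join I (arch_gen {pos (a - of_real s)}) \<noteq> UNIV"
    by (rule arch_join_arch_gen_pos_ne_UNIV[OF I(2) cut])
  ultimately show ?thesis
    using cut[of s] part2 unfolding s_def by simp
qed

end
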